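(* Any deterministic distributed dynamic data structure for $2$-hop neighborhood listing that handles edge insertions and deletions requires $\Omega\left(\frac{n}{\log n}\right)$ amortized rounds.
   Context: Highly dynamic network model: a synchronous network on a fixed set $V$ of $n$ nodes with unique identifiers starts as the empty graph; at the beginning of round $i$ the graph is $G_i=(V,E_i)$, obtained from the previous graph by an adversary inserting and/or deleting an arbitrary (unbounded) set of edges. At the start of each round every node is notified only of the insertions/deletions of edges incident to it; then each node may send a message of $O(\log n)$ bits to each of its current neighbors. A distributed dynamic data structure consists of a local part $DS_v$ at each node $v$; at the end of every round, $DS_v$ may be queried and must answer immediately, without any further communication, either with a correct answer or with $\texttt{inconsistent}$. The amortized round complexity is at most $c$ if for every round $i$, the number of rounds up to round $i$ in which at least one node $v$ has $DS_v$ in an inconsistent state, divided by the total number of topology changes that occurred up to round $i$, is at most $c$. Let $E^{v,2}_i$ be the set of edges of $G_i$ incident to $v$ or to a neighbor of $v$. $2$-hop neighborhood listing: $DS_v$ must respond at the end of round $i$ to a query $\{u,w\}$ with $\texttt{true}$ if $\{u,w\}\in E^{v,2}_i$, $\texttt{false}$ otherwise, or $\texttt{inconsistent}$ (equivalently, membership listing of the 3-vertex path $v-u-w$). *)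

theory Defs
  imports Complex_Main
begin

text \<open>The adversary is a sequence of graphs G, G 0 being the empty graph
  and G i the graph of round i (i >= 1).\<close>

definition adversary :: "nat \<Rightarrow> (nat \<Rightarrow> nat set set) \<Rightarrow> bool" where
  "adversary n G \<longleftrightarrow> G 0 = {} \<and>
     (\<forall>i. \<forall>e\<in>G i. \<exists>u w. u < n \<and> w < n \<and> u \<noteq> w \<and> e = {u, w})"

text \<open>A deterministic distributed dynamic data structure: every function takes the identifier
  of the local node first. ds_notify processes the notification (sets of neighbours whose incident
  edge was inserted / deleted), ds_send computes the message (a bit string, or nothing) sent to a
  given current neighbour, ds_recv processes the received messages, ds_query answers a query
  {u,w} locally (None = inconsistent).\<close>

record 's dds =
  ds_init   :: "nat \<Rightarrow> 's"
  ds_notify :: "nat \<Rightarrow> 's \<Rightarrow> nat set \<Rightarrow> nat set \<Rightarrow> 's"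
  ds_send   :: "nat \<Rightarrow> 's \<Rightarrow> nat \<Rightarrow> bool list option"
  ds_recv   :: "nat \<Rightarrow> 's \<Rightarrow> (nat \<Rightarrow> bool list option) \<Rightarrow> 's"
  ds_query  :: "nat \<Rightarrow> 's \<Rightarrow> nat \<Rightarrow> nat \<Rightarrow> bool option"

text \<open>State of node v at the end of round i (round 0 = initial state).\<close>

primrec run :: "'s dds \<Rightarrow> (nat \<Rightarrow> nat set set) \<Rightarrow> nat \<Rightarrow> nat \<Rightarrow> 's" where
  "run A G 0 = ds_init A"
| "run A G (Suc i) =
     (let mid = (\<lambda>w. ds_notify A w (run A G i w)
                       {u. {u, w} \<in> G (Suc i) - G i} {u. {u, w} \<in> G i - G (Suc i)})
      in (\<lambda>v. ds_recv A v (mid v)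
               (\<lambda>u. if {u, v} \<in> G (Suc i) then ds_send A u (mid u) v else None)))"

definition msg_bounded :: "'s dds \<Rightarrow> nat \<Rightarrow> bool" where
  "msg_bounded A b \<longleftrightarrow> (\<forall>v s u m. ds_send A v s u = Some m \<longrightarrow> length m \<le> b)"

definition twohop :: "nat set set \<Rightarrow> nat \<Rightarrow> nat set set" where
  "twohop E v = {e \<in> E. v \<in> e \<or> (\<exists>u. {v, u} \<in> E \<and> u \<in> e)}"

definition answer :: "'s dds \<Rightarrow> (nat \<Rightarrow> nat set set) \<Rightarrow> nat \<Rightarrow> nat \<Rightarrow> nat \<Rightarrow> nat \<Rightarrow> bool option" where
  "answer A G i v u w = ds_query A v (run A G i v) u w"

definition correct_2hop :: "'s dds \<Rightarrow> nat \<Rightarrow> bool" where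
  "correct_2hop A n \<longleftrightarrow> (\<forall>G. adversary n G \<longrightarrow>
     (\<forall>i\<ge>1. \<forall>v<n. \<forall>u<n. \<forall>w<n.
        answer A G i v u w = None \<or> answer A G i v u w = Some ({u, w} \<in> twohop (G i) v)))"

definition inconsistent_round :: "'s dds \<Rightarrow> nat \<Rightarrow> (nat \<Rightarrow> nat set set) \<Rightarrow> nat \<Rightarrow> bool" where
  "inconsistent_round A n G j \<longleftrightarrow> (\<exists>v<n. \<exists>u<n. \<exists>w<n. answer A G j v u w = None)"

definition incons_count :: "'s dds \<Rightarrow> nat \<Rightarrow> (nat \<Rightarrow> nat set set) \<Rightarrow> nat \<Rightarrow> nat" where
  "incons_count A n G i = card {j \<in> {1..i}. inconsistent_round A n G j}"

definition changes :: "(nat \<Rightarrow> nat set set) \<Rightarrow> nat \<Rightarrow> nat" where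
  "changes G i = (\<Sum>j\<in>{1..i}. card ((G j - G (j - 1)) \<union> (G (j - 1) - G j)))"

definition amortized_at_most :: "'s dds \<Rightarrow> nat \<Rightarrow> real \<Rightarrow> bool" where
  "amortized_at_most A n c \<longleftrightarrow> (\<forall>G. adversary n G \<longrightarrow>
     (\<forall>i. real (incons_count A n G i) \<le> c * real (changes G i)))"

end

theory Submission
  imports Defs "HOL-Real_Asymp.Real_Asymp"
begin

(*
  The adversary grows a star around the hub 0. The secret leaves S \<subseteq> {k+1, ..., n-1} are
  attached in round 1, and listener l \<in> {1, ..., k} stays isolated until round (l-1)T and is
  attached to the hub in round (l-1)T+1. Until then its state does not depend on S, and during
  the next T rounds it learns nothing but the at most T messages of b bits sent by the hub. A
  consistent answer of the current listener to the queries {0,s} reveals S, so in a consistent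
  round S is one of at most k T 2^((b+1)T) decodable sets. If this number is below 2^(n-k-1), some
  S makes all k T rounds inconsistent, while the whole run consists of at most n insertions.
  For k = n/2, b = O(log n) and T = \<Theta>(n / log n) this gives \<Theta>(n^2 / log n) inconsistent
  rounds against n topology changes.
*)

definition hub_step :: "'s dds \<Rightarrow> nat \<Rightarrow> nat set \<Rightarrow> 's \<Rightarrow> bool list option \<Rightarrow> 's" where
  "hub_step A v ins s m = ds_recv A v (ds_notify A v s ins {}) (\<lambda>u. if u = 0 then m else None)"

(* The first message arrives in the round in which the edge to the hub is inserted. *)
fun listen_to_hub :: "'s dds \<Rightarrow> nat \<Rightarrow> 's \<Rightarrow> bool list option list \<Rightarrow> 's" where
  "listen_to_hub A v s [] = s"
| "listen_to_hub A v s (m # ms) = foldl (hub_step A v {}) (hub_step A v {0} s m) ms"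

lemma listen_to_hub_snoc:
  "listen_to_hub A v s (ms @ [m]) =
     hub_step A v (if ms = [] then {0} else {}) (listen_to_hub A v s ms) m"
  by (cases ms) auto

definition bounded_msgs :: "nat \<Rightarrow> bool list option set" where
  "bounded_msgs b = insert None (Some ` {m. length m \<le> b})"

lemma run_eq_run_empty_if_isolated:
  assumes isolated: "\<And>u i. i \<le> P \<Longrightarrow> {u, v} \<notin> G i" and "j \<le> P"
  shows "run A G j v = run A (\<lambda>_. {}) j v"
  using \<open>j \<le> P\<close>
proof (induction j)
  case (Suc j)
  then show ?case using isolated[of "Suc j"] isolated[of j] by (simp add: Let_def)
qed simp

lemma run_eq_listen_to_hub:
  assumes incident: "\<And>u i. {u, v} \<in> G i \<longleftrightarrow> u = 0 \<and> P < i" and "msg_bounded A b"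
  shows "\<exists>ms. length ms = t \<and> set ms \<subseteq> bounded_msgs b \<and>
           run A G (P + t) v = listen_to_hub A v (run A G P v) ms"
proof (induction t)
  case (Suc t)
  then obtain ms where ms: "length ms = t" "set ms \<subseteq> bounded_msgs b"
    "run A G (P + t) v = listen_to_hub A v (run A G P v) ms" by blast
  define mid where "mid w = ds_notify A w (run A G (P + t) w)
      {u. {u, w} \<in> G (Suc (P + t)) - G (P + t)} {u. {u, w} \<in> G (P + t) - G (Suc (P + t))}" for w
  define m where "m = ds_send A 0 (mid 0) v"
  have "m \<in> bounded_msgs b"
    using \<open>msg_bounded A b\<close> unfolding msg_bounded_def bounded_msgs_def m_def
    by (cases m) (auto simp: m_def)
  have "{u. {u, v} \<in> G (Suc (P + t)) - G (P + t)} = (if ms = [] then {0} else {})"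
    "{u. {u, v} \<in> G (P + t) - G (Suc (P + t))} = {}"
    using ms(1) by (auto simp: incident)
  then have notified: "mid v = ds_notify A v (run A G (P + t) v) (if ms = [] then {0} else {}) {}"
    unfolding mid_def by (simp only:)
  have received: "(\<lambda>u. if {u, v} \<in> G (Suc (P + t)) then ds_send A u (mid u) v else None)
      = (\<lambda>u. if u = 0 then m else None)"
    by (auto simp: incident m_def)
  have "run A G (P + Suc t) v = ds_recv A v (mid v)
      (\<lambda>u. if {u, v} \<in> G (Suc (P + t)) then ds_send A u (mid u) v else None)"
    unfolding mid_def by (simp only: run.simps Let_def add_Suc_right)
  also have "\<dots> = listen_to_hub A v (run A G P v) (ms @ [m])"
    by (simp only: notified received hub_step_def listen_to_hub_snoc ms(3))
  finally show ?case using ms \<open>m \<in> bounded_msgs b\<close> by (intro exI[of _ "ms @ [m]"]) auto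
qed simp

lemma finite_bounded_msgs: "finite (bounded_msgs b)"
  using finite_lists_length_le[of "UNIV :: bool set" b] by (simp add: bounded_msgs_def)

lemma card_bounded_msgs: "card (bounded_msgs b) \<le> 2 ^ (b + 1)"
proof -
  have "finite {m :: bool list. length m \<le> b}"
    using finite_lists_length_le[of "UNIV :: bool set" b] by simp
  have "card {m :: bool list. length m \<le> b} = (\<Sum>i\<le>b. 2 ^ i)"
    using card_lists_length_le[of "UNIV :: bool set" b] by simp
  also have "\<dots> < 2 ^ (b + 1)"
    by (induction b) auto
  finally have "card (Some ` {m :: bool list. length m \<le> b}) < 2 ^ (b + 1)"
    by (simp add: card_image)
  then show ?thesis
    unfolding bounded_msgs_def using \<open>finite {m. length m \<le> b}\<close> by (simp add: card_insert_if)
qed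

lemma card_bounded_msg_lists:
  "card {ms. set ms \<subseteq> bounded_msgs b \<and> length ms = t} \<le> 2 ^ ((b + 1) * t)"
proof -
  have "card {ms. set ms \<subseteq> bounded_msgs b \<and> length ms = t} = card (bounded_msgs b) ^ t"
    by (rule card_lists_length_eq[OF finite_bounded_msgs])
  also have "\<dots> \<le> (2 ^ (b + 1)) ^ t"
    by (rule power_mono[OF card_bounded_msgs]) simp
  finally show ?thesis by (simp only: power_mult)
qed

lemma query_eq_twohop_if_consistent:
  assumes "correct_2hop A n" "adversary n G" "1 \<le> j" "\<not> inconsistent_round A n G j"
    and "v < n" "u < n" "w < n"
  shows "ds_query A v (run A G j v) u w = Some ({u, w} \<in> twohop (G j) v)"
  using assms unfolding correct_2hop_def inconsistent_round_def answer_def by blast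

lemma changes_eq_card_if_increasing:
  assumes "\<And>j. G j \<subseteq> G (Suc j)" "\<And>j. finite (G j)" "G 0 = {}"
  shows "changes G i = card (G i)"
proof (induction i)
  case 0
  then show ?case using assms(3) by (simp add: changes_def)
next
  case (Suc i)
  have "(G (Suc i) - G i) \<union> (G i - G (Suc i)) = G (Suc i) - G i"
    using assms(1)[of i] by blast
  then have "changes G (Suc i) = changes G i + card (G (Suc i) - G i)"
    by (simp add: changes_def)
  then show ?case
    using Suc assms(1,2) card_mono[OF assms(2) assms(1)] by (simp add: card_Diff_subset)
qed

definition staggered_star :: "nat \<Rightarrow> nat \<Rightarrow> nat set \<Rightarrow> nat \<Rightarrow> nat set set" where
  "staggered_star k T S j = (if j = 0 then {} else
     (\<lambda>s. {0, s}) ` S \<union> (\<lambda>l. {0, l}) ` {l. 1 \<le> l \<and> l \<le> k \<and> (l - 1) * T < j})"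

lemma staggered_star_incident:
  assumes "\<forall>s\<in>S. k < s" "1 \<le> v" "v \<le> k"
  shows "{u, v} \<in> staggered_star k T S j \<longleftrightarrow> u = 0 \<and> (v - 1) * T < j"
  using assms unfolding staggered_star_def by (auto simp: doubleton_eq_iff)

lemma adversary_staggered_star:
  assumes "S \<subseteq> {k<..<n}" "k < n"
  shows "adversary n (staggered_star k T S)"
  unfolding adversary_def
proof (intro conjI allI ballI)
  fix i e
  assume "e \<in> staggered_star k T S i"
  then obtain x where "e = {0, x}" "0 < x" "x < n"
    using assms by (auto simp: staggered_star_def split: if_splits)
  then show "\<exists>u w. u < n \<and> w < n \<and> u \<noteq> w \<and> e = {u, w}"
    by (intro exI[of _ 0] exI[of _ x]) simp
qed (simp add: staggered_star_def)

lemma twohop_staggered_star: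
  assumes "\<forall>s\<in>S. k < s" "1 \<le> v" "v \<le> k" "(v - 1) * T < j" "k < s"
  shows "{0, s} \<in> twohop (staggered_star k T S j) v \<longleftrightarrow> s \<in> S"
proof -
  have "{v, 0} \<in> staggered_star k T S j"
    using staggered_star_incident[OF assms(1-3)] assms(4) by (simp add: insert_commute)
  then show ?thesis
    using assms unfolding twohop_def by (auto simp: staggered_star_def doubleton_eq_iff)
qed

lemma changes_staggered_star_le:
  assumes "S \<subseteq> {k<..<n}" "k < n"
  shows "changes (staggered_star k T S) i \<le> n"
proof -
  have star: "staggered_star k T S j \<subseteq> (\<lambda>x. {0, x}) ` {..<n}" for j
    using assms unfolding staggered_star_def by auto
  have "finite S"
    using assms(1) finite_subset by blast
  have "changes (staggered_star k T S) i = card (staggered_star k T S i)"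
    by (rule changes_eq_card_if_increasing)
      (auto simp: staggered_star_def \<open>finite S\<close>)
  also have "\<dots> \<le> card ((\<lambda>x. {0, x}) ` {..<n})"
    by (rule card_mono[OF _ star]) simp
  also have "\<dots> \<le> n"
    using card_image_le[of "{..<n}" "\<lambda>x. {0, x}"] by simp
  finally show ?thesis .
qed

lemma staggered_star_listener_state:
  assumes "\<forall>s\<in>S. k < s" "l \<in> {1..k}" "msg_bounded A b"
  shows "\<exists>ms. length ms = t \<and> set ms \<subseteq> bounded_msgs b \<and>
           run A (staggered_star k T S) ((l - 1) * T + t) l
             = listen_to_hub A l (run A (\<lambda>_. {}) ((l - 1) * T) l) ms"
proof -
  have incident: "{u, l} \<in> staggered_star k T S i \<longleftrightarrow> u = 0 \<and> (l - 1) * T < i" for u i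
    using staggered_star_incident[OF assms(1)] assms(2) by auto
  have "run A (staggered_star k T S) ((l - 1) * T) l = run A (\<lambda>_. {}) ((l - 1) * T) l"
    using incident by (intro run_eq_run_empty_if_isolated[where P = "(l - 1) * T"]) auto
  then show ?thesis
    using run_eq_listen_to_hub[OF incident assms(3), of t] by simp
qed

definition decodable_sets :: "'s dds \<Rightarrow> nat \<Rightarrow> nat \<Rightarrow> nat \<Rightarrow> nat \<Rightarrow> nat set set" where
  "decodable_sets A n b k T = (\<Union>l\<in>{1..k}. \<Union>t\<in>{1..T}.
     (\<lambda>ms. {s \<in> {k<..<n}.
        ds_query A l (listen_to_hub A l (run A (\<lambda>_. {}) ((l - 1) * T) l) ms) 0 s = Some True})
     ` {ms. set ms \<subseteq> bounded_msgs b \<and> length ms = t})"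

lemma finite_decodable_sets: "finite (decodable_sets A n b k T)"
  by (simp add: decodable_sets_def finite_lists_length_eq[OF finite_bounded_msgs])

lemma card_decodable_sets: "card (decodable_sets A n b k T) \<le> k * T * 2 ^ ((b + 1) * T)"
proof -
  let ?lists = "\<lambda>t. {ms. set ms \<subseteq> bounded_msgs b \<and> length ms = t}"
  have "card (?lists t) \<le> 2 ^ ((b + 1) * T)" if "t \<le> T" for t
  proof (rule order_trans[OF card_bounded_msg_lists])
    show "(2::nat) ^ ((b + 1) * t) \<le> 2 ^ ((b + 1) * T)"
      using that by (intro power_increasing mult_le_mono2) simp_all
  qed
  moreover have "finite (?lists t)" for t
    by (rule finite_lists_length_eq[OF finite_bounded_msgs])
  ultimately have "card (f ` ?lists t) \<le> 2 ^ ((b + 1) * T)" if "t \<le> T" for t and f :: "_ \<Rightarrow> nat set"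
    using card_image_le order_trans that by blast
  then have "card (decodable_sets A n b k T) \<le> (\<Sum>l\<in>{1..k}. \<Sum>t\<in>{1..T}. (2::nat) ^ ((b + 1) * T))"
    unfolding decodable_sets_def
    by (intro order_trans[OF card_UN_le] sum_mono) (auto intro: order_trans[OF card_UN_le] sum_mono)
  then show ?thesis by simp
qed

lemma round_decomposition:
  fixes j k T :: nat
  assumes "j \<in> {1..k * T}"
  obtains l t where "l \<in> {1..k}" "t \<in> {1..T}" "j = (l - 1) * T + t"
proof
  have "0 < T" using assms by (cases T) auto
  show "(j - 1) div T + 1 \<in> {1..k}" "(j - 1) mod T + 1 \<in> {1..T}"
    using assms \<open>0 < T\<close> by (auto simp: div_less_iff_less_mult Suc_le_eq)
  show "j = ((j - 1) div T + 1 - 1) * T + ((j - 1) mod T + 1)"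
    using assms by (simp add: div_mult_mod_eq[of "j - 1" T, symmetric])
qed

lemma secret_decodable_if_consistent:
  assumes "correct_2hop A n" "msg_bounded A b" "S \<subseteq> {k<..<n}" "k < n"
    and "j \<in> {1..k * T}" "\<not> inconsistent_round A n (staggered_star k T S) j"
  shows "S \<in> decodable_sets A n b k T"
proof -
  obtain l t where l: "l \<in> {1..k}" and t: "t \<in> {1..T}" and j: "j = (l - 1) * T + t"
    using round_decomposition[OF assms(5)] .
  have secret_above: "\<forall>s\<in>S. k < s" using assms(3) by auto
  obtain ms where ms: "length ms = t" "set ms \<subseteq> bounded_msgs b"
    and state: "run A (staggered_star k T S) j l
                  = listen_to_hub A l (run A (\<lambda>_. {}) ((l - 1) * T) l) ms"
    using staggered_star_listener_state[OF secret_above l assms(2)] j by blast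
  have "ds_query A l (run A (staggered_star k T S) j l) 0 s = Some (s \<in> S)" if "s \<in> {k<..<n}" for s
    using query_eq_twohop_if_consistent[OF assms(1) adversary_staggered_star[OF assms(3,4)]]
      twohop_staggered_star[OF secret_above] assms(4-6) l t j that by auto
  then have "S = {s \<in> {k<..<n}. ds_query A l (run A (staggered_star k T S) j l) 0 s = Some True}"
    using assms(3) by auto
  then show ?thesis
    unfolding decodable_sets_def state using l t ms by blast
qed

lemma exists_adversary_all_rounds_inconsistent:
  assumes "correct_2hop A n" "msg_bounded A b" "k < n"
    and few_views: "k * T * 2 ^ ((b + 1) * T) < 2 ^ (n - Suc k)"
  shows "\<exists>G. adversary n G \<and> incons_count A n G (k * T) = k * T \<and> changes G (k * T) \<le> n"
proof -
  have "card (decodable_sets A n b k T) < card (Pow {k<..<n})"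
    using card_decodable_sets[of A n b k T] few_views by (simp add: card_Pow)
  then obtain S where S: "S \<subseteq> {k<..<n}" "S \<notin> decodable_sets A n b k T"
    using card_mono[OF finite_decodable_sets[of A n b k T], of "Pow {k<..<n}"] by auto
  define G where "G = staggered_star k T S"
  have "{j \<in> {1..k * T}. inconsistent_round A n G j} = {1..k * T}"
    using secret_decodable_if_consistent[OF assms(1,2) S(1) assms(3)] S(2) unfolding G_def by blast
  then have "incons_count A n G (k * T) = k * T"
    unfolding incons_count_def by simp
  then show ?thesis
    using adversary_staggered_star[OF S(1) assms(3)] changes_staggered_star_le[OF S(1) assms(3)]
    unfolding G_def by blast
qed

lemma not_amortized_at_most:
  assumes "adversary n G" "changes G i \<le> n" "0 \<le> a" "a * real n < real (incons_count A n G i)"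
  shows "\<not> amortized_at_most A n a"
proof -
  have "a * real (changes G i) \<le> a * real n"
    using assms(2,3) by (intro mult_left_mono) auto
  then have "a * real (changes G i) < real (incons_count A n G i)"
    using assms(4) by linarith
  then show ?thesis
    using assms(1) unfolding amortized_at_most_def by (meson not_le)
qed

lemma real_div_gt_sub_one: "real n / real m - 1 < real (n div m)"
  by (metis floor_divide_of_nat_eq of_int_of_nat_eq real_of_int_floor_gt_diff_one)

lemma mult_pow2_lt_pow2_if_exp_gap:
  fixes k T b n :: nat
  assumes "8 * ((b + 1) * T) \<le> n" "2 * k \<le> n" "T \<le> n"
    and exp_gap: "real n ^ 2 * 2 powr (real n / 8) < 2 powr (real n / 2 - 1)"
  shows "k * T * 2 ^ ((b + 1) * T) < 2 ^ (n - Suc k)"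
proof -
  have pow2: "real (2 ^ x) = 2 powr real x" for x :: nat
    by (simp add: powr_realpow)
  have "real (k * T * 2 ^ ((b + 1) * T)) = real k * real T * 2 powr real ((b + 1) * T)"
    by (simp only: of_nat_mult pow2)
  also have "\<dots> \<le> real n ^ 2 * 2 powr (real n / 8)"
  proof -
    have "real (8 * ((b + 1) * T)) \<le> real n"
      using assms(1) by (rule of_nat_mono)
    then show ?thesis
      unfolding power2_eq_square using assms(2,3) by (intro mult_mono powr_mono) auto
  qed
  also have "\<dots> < 2 powr (real n / 2 - 1)"
    by (rule exp_gap)
  also have "\<dots> \<le> 2 powr real (n - Suc k)"
    using assms(2) by (intro powr_mono) auto
  also have "\<dots> = real (2 ^ (n - Suc k))"
    by (simp only: pow2)
  finally show ?thesis by (simp only: of_nat_less_iff)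
qed

lemma many_staggered_rounds:
  fixes B n L :: nat and lg :: real
  assumes "4 \<le> n" "0 < lg" "1 \<le> L" "real L \<le> 2 * lg"
    and log_small: "32 * (real B + 1) * lg < real n"
  shows "real n ^ 2 / lg < 128 * (real B + 1) * real (n div 2 * (n div (8 * (B + 1) * L)))"
proof -
  define m where "m = 8 * (B + 1) * L"
  define d where "d = 16 * (real B + 1) * lg"
  define Y where "Y = real n / d"
  have "0 < d" using \<open>0 < lg\<close> unfolding d_def by simp
  have "2 * d < real n"
    unfolding d_def using log_small by linarith
  then have "2 < Y"
    unfolding Y_def using \<open>0 < d\<close> by (simp add: less_divide_eq)
  have "real m = 8 * (real B + 1) * real L"
    unfolding m_def by simp
  also have "\<dots> \<le> 8 * (real B + 1) * (2 * lg)"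
    using \<open>real L \<le> 2 * lg\<close> by (intro mult_left_mono) auto
  finally have "real m \<le> d"
    unfolding d_def by (simp add: algebra_simps)
  moreover have "0 < real m"
    using \<open>1 \<le> L\<close> unfolding m_def by simp
  ultimately have "Y \<le> real n / real m"
    unfolding Y_def by (intro divide_left_mono) auto
  then have "Y / 2 < real (n div m)"
    using real_div_gt_sub_one[of n m] \<open>2 < Y\<close> by linarith
  moreover have "real n / 4 \<le> real (n div 2)"
    using \<open>4 \<le> n\<close> by linarith
  ultimately have "real n / 4 * (Y / 2) < real (n div 2) * real (n div m)"
    using \<open>2 < Y\<close> \<open>4 \<le> n\<close> by (intro mult_le_less_imp_less) auto
  have "real n ^ 2 = 8 * d * (real n / 4 * (Y / 2))"
    using \<open>0 < d\<close> unfolding Y_def by (simp add: field_simps power2_eq_square)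
  also have "\<dots> < 8 * d * (real (n div 2) * real (n div m))"
    using \<open>real n / 4 * (Y / 2) < real (n div 2) * real (n div m)\<close> \<open>0 < d\<close> by simp
  finally show ?thesis
    using \<open>0 < lg\<close> unfolding d_def m_def by (simp add: pos_divide_less_eq algebra_simps)
qed

lemma staggering_parameters:
  fixes B n :: nat
  defines "lg \<equiv> log 2 (real n)"
  assumes "4 \<le> n" "1 \<le> lg"
    and exp_gap: "real n ^ 2 * 2 powr (real n / 8) < 2 powr (real n / 2 - 1)"
    and log_small: "32 * (real B + 1) * lg < real n"
  shows "\<exists>k T. k < n \<and> k * T * 2 ^ ((B * nat \<lceil>lg\<rceil> + 1) * T) < 2 ^ (n - Suc k) \<and>
           real n ^ 2 / lg < 128 * (real B + 1) * real (k * T)"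
proof -
  define L where "L = nat \<lceil>lg\<rceil>"
  define k where "k = n div 2"
  define T where "T = n div (8 * (B + 1) * L)"
  have "lg \<le> real L" "real L \<le> 2 * lg"
    using \<open>1 \<le> lg\<close> unfolding L_def by linarith+
  then have "1 \<le> L" using \<open>1 \<le> lg\<close> by linarith
  have "8 * ((B * L + 1) * T) \<le> T * (8 * (B + 1) * L)"
    using \<open>1 \<le> L\<close> by (simp add: algebra_simps)
  also have "\<dots> \<le> n"
    unfolding T_def by (rule div_times_less_eq_dividend)
  finally have "k * T * 2 ^ ((B * L + 1) * T) < 2 ^ (n - Suc k)"
    using exp_gap by (intro mult_pow2_lt_pow2_if_exp_gap) (auto simp: k_def T_def)
  moreover have "real n ^ 2 / lg < 128 * (real B + 1) * real (k * T)"
    unfolding k_def T_def using assms(2,3) \<open>1 \<le> L\<close> \<open>real L \<le> 2 * lg\<close> log_small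
    by (intro many_staggered_rounds) auto
  moreover have "k < n" using \<open>4 \<le> n\<close> unfolding k_def by simp
  ultimately show ?thesis unfolding L_def by blast
qed

lemma eventually_staggering_parameters:
  fixes B :: nat
  shows "\<forall>\<^sub>F n in at_top. 0 < log 2 (real n) \<and> (\<exists>k T. k < n \<and>
           k * T * 2 ^ ((B * nat \<lceil>log 2 (real n)\<rceil> + 1) * T) < 2 ^ (n - Suc k) \<and>
           real n ^ 2 / log 2 (real n) < 128 * (real B + 1) * real (k * T))"
proof -
  have "\<forall>\<^sub>F n in at_top. (4::nat) \<le> n" by (rule eventually_ge_at_top)
  moreover have "\<forall>\<^sub>F n in at_top. 1 \<le> log 2 (real n)" by real_asymp
  moreover have "\<forall>\<^sub>F n in at_top. real n ^ 2 * 2 powr (real n / 8) < 2 powr (real n / 2 - 1)"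
    by real_asymp
  moreover have "\<forall>\<^sub>F n in at_top. 32 * (real B + 1) * log 2 (real n) < real n"
    by real_asymp
  ultimately show ?thesis
    by eventually_elim (use staggering_parameters in auto)
qed

theorem corollary6:
  fixes B :: nat
  shows "\<exists>c>0. \<exists>n0. \<forall>n\<ge>n0. \<forall>A :: 's dds.
           msg_bounded A (B * nat \<lceil>log 2 (real n)\<rceil>) \<longrightarrow> correct_2hop A n \<longrightarrow>
           \<not> amortized_at_most A n (c * real n / log 2 (real n))"
proof -
  define c :: real where "c = 1 / (128 * (real B + 1))"
  obtain n0 where n0: "\<And>n. n \<ge> n0 \<Longrightarrow> 0 < log 2 (real n) \<and> (\<exists>k T. k < n \<and>
      k * T * 2 ^ ((B * nat \<lceil>log 2 (real n)\<rceil> + 1) * T) < 2 ^ (n - Suc k) \<and>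
      real n ^ 2 / log 2 (real n) < 128 * (real B + 1) * real (k * T))"
    using eventually_staggering_parameters[of B] unfolding eventually_at_top_linorder by blast
  have "\<not> amortized_at_most A n (c * real n / log 2 (real n))"
    if large: "n \<ge> n0" and bounded: "msg_bounded A (B * nat \<lceil>log 2 (real n)\<rceil>)"
      and correct: "correct_2hop A n"
    for n and A :: "'s dds"
  proof -
    obtain k T where "0 < log 2 (real n)" "k < n"
      and "k * T * 2 ^ ((B * nat \<lceil>log 2 (real n)\<rceil> + 1) * T) < 2 ^ (n - Suc k)"
      and many_rounds: "real n ^ 2 / log 2 (real n) < 128 * (real B + 1) * real (k * T)"
      using n0[OF large] by blast
    then obtain G where "adversary n G" "changes G (k * T) \<le> n"
      "incons_count A n G (k * T) = k * T"
      using exists_adversary_all_rounds_inconsistent[OF correct bounded] by blast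
    moreover have "c * real n / log 2 (real n) * real n
        = real n ^ 2 / log 2 (real n) / (128 * (real B + 1))"
      unfolding c_def by (simp add: power2_eq_square)
    moreover have "\<dots> < real (k * T)"
      using many_rounds by (subst pos_divide_less_eq) (simp_all add: mult.commute)
    ultimately show ?thesis
      using \<open>0 < log 2 (real n)\<close> unfolding c_def by (intro not_amortized_at_most) auto
  qed
  moreover have "c > 0"
    unfolding c_def by simp
  ultimately show ?thesis by blast
qed

end
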